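(* Let $d\ge1$, $\beta>0$, fix a prompt $x$, and let $\pi_{\rm ref}(y|x)=\mathcal{N}(y;\mathbf{0},I)$ and $\pi_{\boldsymbol{\theta}}(y|x)=\mathcal{N}(y;\mu_{\boldsymbol{\theta}},\sigma^2I)$ for $\sigma>0$, where $\mu_{\boldsymbol{\theta}}=\mu_{\boldsymbol{\theta}}(x)\in\mathbb{R}^d$ depends differentiably on the parameter $\boldsymbol{\theta}$. Let $r_{\boldsymbol{\phi}}:\mathbb{R}^d\to\mathbb{R}$ be $C^2$ with $\sup_{y\in\mathbb{R}^d}\|\nabla_y r_{\boldsymbol{\phi}}(y)\|\le M<\infty$. Define \[ \mathcal{J}_\sigma(\boldsymbol{\theta},\boldsymbol{\phi})=\mathbb{E}_{y\sim\pi_{\boldsymbol{\theta}}(\cdot|x)}[r_{\boldsymbol{\phi}}(y)]-\beta\,D_{KL}\big(\pi_{\boldsymbol{\theta}}(\cdot|x)\,\|\,\pi_{\rm ref}(\cdot|x)\big). \] Then \[ \lim_{\sigma\to0}\nabla_{\boldsymbol{\theta}}\mathcal{J}_\sigma(\boldsymbol{\theta},\boldsymbol{\phi})=\nabla_{\boldsymbol{\theta}}\Big[r_{\boldsymbol{\phi}}(\mu_{\boldsymbol{\theta}})-\frac{\beta}{2}\|\mu_{\boldsymbol{\theta}}\|^2\Big]. \]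
   Context: $\mathcal{N}(y;\mu,\Sigma)$ denotes the Gaussian density on $\mathbb{R}^d$ with mean $\mu$ and covariance $\Sigma$; $D_{KL}$ is the Kullback–Leibler divergence. *)

theory Defs
  imports "HOL-Analysis.Analysis" "HOL-Probability.Probability"
begin

definition gauss_density :: "real^'n \<Rightarrow> real \<Rightarrow> real^'n \<Rightarrow> real" where
  "gauss_density m s y =
     exp (- (norm (y - m))\<^sup>2 / (2 * s\<^sup>2)) / (2 * pi * s\<^sup>2) powr (real CARD('n) / 2)"

definition gauss_measure :: "real^'n \<Rightarrow> real \<Rightarrow> (real^'n) measure" where
  "gauss_measure m s = density lborel (gauss_density m s)"

text \<open>Note: library KL_divergence b M N is D(N || M).\<close>
definition J_obj :: "real \<Rightarrow> ('p \<Rightarrow> real^'n) \<Rightarrow> (real^'n \<Rightarrow> real) \<Rightarrow> real \<Rightarrow> 'p \<Rightarrow> real" where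
  "J_obj \<beta> \<mu> r \<sigma> \<theta> =
     (\<integral>y. r y \<partial>(gauss_measure (\<mu> \<theta>) \<sigma>))
     - \<beta> * KL_divergence (exp 1) (gauss_measure 0 1) (gauss_measure (\<mu> \<theta>) \<sigma>)"

end

theory Submission
  imports Defs
begin

text \<open>Reparametrise y = \<mu> + \<sigma> w with w standard normal. The reward term becomes
  E r(\<mu> + \<sigma> w), and D(N(\<mu>, \<sigma>^2 I) || N(0, I)) = |\<mu>|^2/2 + c(\<sigma>) with c independent of \<mu>.
  Since \<nabla>r is bounded, r is Lipschitz and the difference quotients of \<mu> \<mapsto> E r(\<mu> + \<sigma> w)
  are dominated by a constant, so one may differentiate under the integral: the gradient in
  \<mu> is E \<nabla>r(\<mu> + \<sigma> w) - \<beta> \<mu>, and the chain rule through \<theta> \<mapsto> \<mu> applies the adjoint of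
  D\<mu>. As \<sigma> \<rightarrow> 0, dominated convergence for the bounded continuous \<nabla>r gives
  E \<nabla>r(\<mu> + \<sigma> w) \<rightarrow> \<nabla>r(\<mu>), the gradient of the deterministic objective.\<close>

lemma integral_dominated_convergence_at:
  fixes f :: "'c::first_countable_topology \<Rightarrow> 'a \<Rightarrow> 'b::{banach, second_countable_topology}"
  assumes "\<And>y. f y \<in> borel_measurable M" "l \<in> borel_measurable M" "integrable M w"
    and lim: "AE x in M. ((\<lambda>y. f y x) \<longlongrightarrow> l x) (at a within S)"
    and bound: "\<And>y. AE x in M. norm (f y x) \<le> w x"
  shows "((\<lambda>y. \<integral>x. f y x \<partial>M) \<longlongrightarrow> (\<integral>x. l x \<partial>M)) (at a within S)"
proof (unfold tendsto_at_iff_sequentially, intro allI impI)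
  fix X :: "nat \<Rightarrow> 'c"
  assume "\<forall>i. X i \<in> S - {a}" and "X \<longlonglongrightarrow> a"
  then have X: "filterlim X (at a within S) sequentially"
    by (simp add: filterlim_at)
  show "((\<lambda>y. \<integral>x. f y x \<partial>M) \<circ> X) \<longlonglongrightarrow> (\<integral>x. l x \<partial>M)"
    unfolding comp_def
  proof (rule integral_dominated_convergence[where w = w])
    show "AE x in M. (\<lambda>i. f (X i) x) \<longlonglongrightarrow> l x"
      using lim by eventually_elim (rule filterlim_compose[OF _ X])
  qed (use assms in auto)
qed

lemma abs_diff_le_of_gradient_bound:
  fixes r :: "'a::euclidean_space \<Rightarrow> real"
  assumes "\<And>y. (r has_derivative (\<lambda>h. g y \<bullet> h)) (at y)" and "\<And>y. norm (g y) \<le> B"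
  shows "\<bar>r x - r y\<bar> \<le> B * norm (x - y)"
proof -
  have "onorm (\<lambda>h. g y \<bullet> h) \<le> B" for y
  proof (rule onorm_le)
    show "norm (g y \<bullet> h) \<le> B * norm h" for h
      using Cauchy_Schwarz_ineq2[of "g y" h] mult_right_mono[OF assms(2)[of y] norm_ge_zero[of h]]
      by simp
  qed
  then show ?thesis
    using differentiable_bound[of UNIV r "\<lambda>y h. g y \<bullet> h" B x y] assms(1) by simp
qed

lemma abs_remainder_le_of_gradient_bound:
  fixes r :: "'a::euclidean_space \<Rightarrow> real"
  assumes "\<And>y. (r has_derivative (\<lambda>h. g y \<bullet> h)) (at y)" and "\<And>y. norm (g y) \<le> B"
  shows "\<bar>r (p + h) - r p - g p \<bullet> h\<bar> \<le> 2 * B * norm h"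
proof -
  have "\<bar>r (p + h) - r p - g p \<bullet> h\<bar> \<le> B * norm h + norm (g p) * norm h"
    using abs_diff_le_of_gradient_bound[OF assms, of "p + h" p] Cauchy_Schwarz_ineq2[of "g p" h]
    by simp
  also have "\<dots> \<le> 2 * B * norm h"
    using mult_right_mono[OF assms(2)[of p] norm_ge_zero[of h]] by simp
  finally show ?thesis .
qed

lemma integrable_shift_scaled_of_lipschitz:
  fixes M :: "'a::euclidean_space measure" and r :: "'a \<Rightarrow> real"
  assumes "prob_space M" and [measurable_cong]: "sets M = sets borel" and "integrable M norm"
    and [measurable]: "r \<in> borel_measurable borel"
    and lipschitz: "\<And>x y. \<bar>r x - r y\<bar> \<le> B * norm (x - y)"
  shows "integrable M (\<lambda>w. r (p + s *\<^sub>R w))"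
proof (rule Bochner_Integration.integrable_bound)
  interpret prob_space M by fact
  show "integrable M (\<lambda>w. \<bar>r p\<bar> + B * \<bar>s\<bar> * norm w)"
    using \<open>integrable M norm\<close> by simp
  show "AE w in M. norm (r (p + s *\<^sub>R w)) \<le> norm (\<bar>r p\<bar> + B * \<bar>s\<bar> * norm w)"
  proof (rule AE_I2)
    fix w
    have "\<bar>r (p + s *\<^sub>R w) - r p\<bar> \<le> B * (\<bar>s\<bar> * norm w)"
      using lipschitz[of "p + s *\<^sub>R w" p] by simp
    then show "norm (r (p + s *\<^sub>R w)) \<le> norm (\<bar>r p\<bar> + B * \<bar>s\<bar> * norm w)"
      unfolding real_norm_def mult.assoc by arith
  qed
qed simp

lemma has_derivative_integral_shift:
  fixes M :: "'a::euclidean_space measure" and r :: "'a::euclidean_space \<Rightarrow> real"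
  assumes "prob_space M" and [measurable_cong]: "sets M = sets borel" and "integrable M norm"
    and r: "\<And>y. (r has_derivative (\<lambda>h. g y \<bullet> h)) (at y)"
    and g: "continuous_on UNIV g" and bound: "\<And>y. norm (g y) \<le> B"
  shows "((\<lambda>m. \<integral>w. r (m + s *\<^sub>R w) \<partial>M) has_derivative (\<lambda>h. (\<integral>w. g (m + s *\<^sub>R w) \<partial>M) \<bullet> h)) (at m)"
proof -
  interpret prob_space M by fact
  have [measurable]: "g \<in> borel_measurable borel"
    using g by (rule borel_measurable_continuous_onI)
  have [measurable]: "r \<in> borel_measurable borel"
    using r by (intro borel_measurable_continuous_onI continuous_at_imp_continuous_on)
      (auto intro: has_derivative_continuous)
  have int_r: "integrable M (\<lambda>w. r (p + s *\<^sub>R w))" for p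
    using assms(1-3) by (rule integrable_shift_scaled_of_lipschitz[where B = B])
      (simp_all add: abs_diff_le_of_gradient_bound[OF r bound])
  have int_g: "integrable M (\<lambda>w. g (m + s *\<^sub>R w))"
    using bound by (intro integrable_const_bound[where B = B]) auto
  define G where "G = (\<integral>w. g (m + s *\<^sub>R w) \<partial>M)"
  define Q where "Q h w = (r (m + s *\<^sub>R w + h) - r (m + s *\<^sub>R w) - g (m + s *\<^sub>R w) \<bullet> h) / norm h"
    for h w
  have quotient: "(\<integral>w. r ((m + h) + s *\<^sub>R w) \<partial>M) - (\<integral>w. r (m + s *\<^sub>R w) \<partial>M) - G \<bullet> h
      = norm h * (\<integral>w. Q h w \<partial>M)" if "h \<noteq> 0" for h
  proof -
    have "(\<integral>w. r ((m + h) + s *\<^sub>R w) \<partial>M) - (\<integral>w. r (m + s *\<^sub>R w) \<partial>M) - G \<bullet> h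
        = (\<integral>w. r ((m + h) + s *\<^sub>R w) - r (m + s *\<^sub>R w) - g (m + s *\<^sub>R w) \<bullet> h \<partial>M)"
      using int_r[of "m + h"] int_r[of m] int_g by (simp add: G_def Bochner_Integration.integral_diff)
    also have "\<dots> = (\<integral>w. norm h * Q h w \<partial>M)"
      using that by (intro Bochner_Integration.integral_cong) (simp_all add: Q_def add_ac)
    finally show ?thesis
      by simp
  qed
  have "B \<ge> 0"
    using bound[of 0] norm_ge_zero order_trans by blast
  have "((\<lambda>h. \<integral>w. Q h w \<partial>M) \<longlongrightarrow> (\<integral>w. 0 \<partial>M)) (at 0)"
  proof (rule integral_dominated_convergence_at[where w = "\<lambda>_. 2 * B"])
    show "AE w in M. ((\<lambda>h. Q h w) \<longlongrightarrow> 0) (at 0)"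
    proof (rule AE_I2)
      fix w
      have "((\<lambda>h. norm (Q h w)) \<longlongrightarrow> 0) (at 0)"
        using r[of "m + s *\<^sub>R w"] by (simp add: has_derivative_at Q_def)
      then show "((\<lambda>h. Q h w) \<longlongrightarrow> 0) (at 0)"
        by (simp only: tendsto_norm_zero_iff)
    qed
    show "AE w in M. norm (Q h w) \<le> 2 * B" for h
      using abs_remainder_le_of_gradient_bound[OF r bound, of "m + s *\<^sub>R w" h for w] \<open>B \<ge> 0\<close>
      by (intro AE_I2) (cases "h = 0"; simp add: Q_def divide_le_eq)
  qed (auto simp: Q_def)
  then have "((\<lambda>h. \<bar>\<integral>w. Q h w \<partial>M\<bar>) \<longlongrightarrow> 0) (at 0)"
    by (simp add: tendsto_rabs_zero)
  moreover have "\<forall>\<^sub>F h in at 0. \<bar>\<integral>w. Q h w \<partial>M\<bar> =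
      norm ((\<integral>w. r ((m + h) + s *\<^sub>R w) \<partial>M) - (\<integral>w. r (m + s *\<^sub>R w) \<partial>M) - G \<bullet> h) / norm h"
    by (auto simp: eventually_at_filter quotient abs_mult)
  ultimately have "((\<lambda>h. norm ((\<integral>w. r ((m + h) + s *\<^sub>R w) \<partial>M) - (\<integral>w. r (m + s *\<^sub>R w) \<partial>M) - G \<bullet> h)
      / norm h) \<longlongrightarrow> 0) (at 0)"
    by (rule Lim_transform_eventually)
  then show ?thesis
    by (simp add: has_derivative_at G_def bounded_linear_inner_right)
qed

lemma tendsto_integral_shift_scaled:
  fixes M :: "'a::euclidean_space measure" and g :: "'a::euclidean_space \<Rightarrow> 'b::euclidean_space"
  assumes "prob_space M" and [measurable_cong]: "sets M = sets borel"
    and g: "continuous_on UNIV g" and bound: "\<And>y. norm (g y) \<le> B"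
  shows "((\<lambda>s. \<integral>w. g (a + s *\<^sub>R w) \<partial>M) \<longlongrightarrow> g a) (at 0)"
proof -
  interpret prob_space M by fact
  have [measurable]: "g \<in> borel_measurable borel"
    using g by (rule borel_measurable_continuous_onI)
  have "((\<lambda>s. \<integral>w. g (a + s *\<^sub>R w) \<partial>M) \<longlongrightarrow> (\<integral>w. g a \<partial>M)) (at 0)"
  proof (rule integral_dominated_convergence_at[where w = "\<lambda>_. B"])
    show "AE w in M. ((\<lambda>s. g (a + s *\<^sub>R w)) \<longlongrightarrow> g a) (at 0)"
    proof (rule AE_I2)
      fix w
      have "((\<lambda>s. a + s *\<^sub>R w) \<longlongrightarrow> a + 0 *\<^sub>R w) (at 0)"
        by (intro tendsto_intros)
      then show "((\<lambda>s. g (a + s *\<^sub>R w)) \<longlongrightarrow> g a) (at 0)"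
        using g by (intro isCont_tendsto_compose[where g = g]) (auto simp: continuous_on_eq_continuous_at)
    qed
  qed (use bound in auto)
  then show ?thesis
    by (simp add: prob_space)
qed

lemma sets_gauss_measure [measurable_cong, simp]: "sets (gauss_measure m s) = sets borel"
  by (simp add: gauss_measure_def)

lemma gauss_density_nonneg: "0 \<le> gauss_density m s y"
  by (simp add: gauss_density_def)

lemma gauss_density_pos: "s \<noteq> 0 \<Longrightarrow> 0 < gauss_density m s y"
  by (simp add: gauss_density_def)

lemma borel_measurable_gauss_density [measurable]: "gauss_density m s \<in> borel_measurable borel"
  unfolding gauss_density_def by measurable

lemma gauss_density_affine:
  fixes m w :: "real^'n"
  assumes "s \<noteq> 0"
  shows "\<bar>s\<bar> ^ CARD('n) * gauss_density m s (m + s *\<^sub>R w) = gauss_density 0 1 w"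
proof -
  have "s\<^sup>2 = \<bar>s\<bar> powr 2"
    using assms by (simp add: powr_realpow)
  then have "s\<^sup>2 powr (real CARD('n) / 2) = \<bar>s\<bar> ^ CARD('n)"
    using assms by (simp only: powr_powr) (simp add: powr_realpow)
  then show ?thesis
    using assms by (simp add: gauss_density_def powr_mult power_mult_distrib)
qed

lemma gauss_measure_affine:
  fixes m :: "real^'n"
  assumes "s \<noteq> 0"
  shows "distr (gauss_measure 0 1) borel (\<lambda>w. m + s *\<^sub>R w) = gauss_measure m s"
proof -
  have "gauss_measure m s =
      density (density (distr lborel borel (\<lambda>w. m + s *\<^sub>R w)) (\<lambda>_. \<bar>s\<bar> ^ CARD('n))) (gauss_density m s)"
    unfolding gauss_measure_def by (subst lborel_affine[OF assms, of m]) simp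
  also have "\<dots> = density (distr lborel borel (\<lambda>w. m + s *\<^sub>R w))
      (\<lambda>y. \<bar>s\<bar> ^ CARD('n) * gauss_density m s y)"
    by (simp add: density_density_eq ennreal_mult gauss_density_nonneg)
  also have "\<dots> = distr (density lborel (gauss_density 0 1)) borel (\<lambda>w. m + s *\<^sub>R w)"
    using assms by (simp add: density_distr gauss_density_affine)
  finally show ?thesis
    by (simp add: gauss_measure_def)
qed

lemma gauss_density_std_eq_prod:
  fixes y :: "real^'n"
  shows "gauss_density 0 1 y = (\<Prod>b\<in>Basis. std_normal_density (y \<bullet> b))"
proof -
  have "(\<Prod>b\<in>(Basis :: (real^'n) set). std_normal_density (y \<bullet> b))
      = exp (\<Sum>b\<in>Basis. - (y \<bullet> b)\<^sup>2 / 2) / sqrt (2 * pi) ^ CARD('n)"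
    by (simp add: std_normal_density_def prod_dividef exp_sum)
  also have "(\<Sum>b\<in>(Basis :: (real^'n) set). - (y \<bullet> b)\<^sup>2 / 2) = - (y \<bullet> y) / 2"
    by (simp add: euclidean_inner[of y y] power2_eq_square sum_negf sum_divide_distrib)
  also have "sqrt (2 * pi) ^ CARD('n) = (2 * pi) powr (real CARD('n) / 2)"
    by (simp add: powr_half_sqrt[symmetric] powr_power)
  finally show ?thesis
    by (simp add: gauss_density_def dot_square_norm)
qed

lemma prob_space_gauss_measure_std: "prob_space (gauss_measure (0 :: real^'n) 1)"
proof
  have "(\<integral>\<^sup>+y. ennreal (gauss_density 0 1 (y :: real^'n)) \<partial>lborel)
      = (\<integral>\<^sup>+y. (\<Prod>b\<in>Basis. ennreal (std_normal_density (y \<bullet> b))) \<partial>(lborel :: (real^'n) measure))"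
    by (simp add: gauss_density_std_eq_prod prod_ennreal normal_density_nonneg)
  also have "\<dots> = (\<Prod>b\<in>(Basis :: (real^'n) set). \<integral>\<^sup>+x. ennreal (std_normal_density x) \<partial>lborel)"
    by (rule nn_integral_lborel_prod) auto
  also have "\<dots> = 1"
    by (simp add: nn_integral_eq_integral)
  finally show "emeasure (gauss_measure (0 :: real^'n) 1) (space (gauss_measure 0 1)) = 1"
    by (simp add: gauss_measure_def emeasure_density)
qed

lemma prob_space_gauss_measure:
  fixes m :: "real^'n"
  assumes "s \<noteq> 0"
  shows "prob_space (gauss_measure m s)"
  using prob_space.prob_space_distr[OF prob_space_gauss_measure_std, of "\<lambda>w. m + s *\<^sub>R w" borel]
  by (simp add: gauss_measure_affine[OF assms])

lemma integral_gauss_measure: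
  fixes m :: "real^'n" and f :: "real^'n \<Rightarrow> 'b::{banach, second_countable_topology}"
  assumes "s \<noteq> 0" and [measurable]: "f \<in> borel_measurable borel"
  shows "(\<integral>y. f y \<partial>gauss_measure m s) = (\<integral>w. f (m + s *\<^sub>R w) \<partial>gauss_measure 0 1)"
  by (simp add: gauss_measure_affine[OF assms(1), symmetric] integral_distr)

lemma integrable_gauss_density:
  fixes m :: "real^'n"
  assumes "s \<noteq> 0"
  shows "integrable lborel (gauss_density m s)"
proof -
  interpret prob_space "gauss_measure m s"
    using assms by (rule prob_space_gauss_measure)
  show ?thesis
    using integrable_const[of "1 :: real"]
    by (simp add: gauss_measure_def integrable_density gauss_density_nonneg)
qed

lemma gauss_density_std_norm_sq_le:
  fixes w :: "real^'n"
  shows "gauss_density 0 1 w * (norm w)\<^sup>2 \<le> 4 * 2 powr (real CARD('n) / 2) * gauss_density 0 (sqrt 2) w"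
proof -
  define u where "u = (norm w)\<^sup>2 / 4"
  have "u \<le> exp u"
    using exp_ge_add_one_self[of u] by linarith
  then have "u * exp (- 2 * u) \<le> exp u * exp (- 2 * u)"
    by (intro mult_right_mono) auto
  then have "(norm w)\<^sup>2 * exp (- (norm w)\<^sup>2 / 2) \<le> 4 * exp (- (norm w)\<^sup>2 / 4)"
    by (simp add: u_def field_simps flip: exp_add)
  moreover have "(4 * pi) powr (real CARD('n) / 2) = 2 powr (real CARD('n) / 2) * (2 * pi) powr (real CARD('n) / 2)"
    by (simp add: powr_mult[symmetric])
  ultimately show ?thesis
    by (simp add: gauss_density_def field_simps)
qed

lemma integrable_gauss_measure_std_norm_sq:
  "integrable (gauss_measure (0 :: real^'n) 1) (\<lambda>w. (norm w)\<^sup>2)"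
  unfolding gauss_measure_def
proof (subst integrable_density)
  show "integrable lborel (\<lambda>w::real^'n. gauss_density 0 1 w *\<^sub>R (norm w)\<^sup>2)"
  proof (rule Bochner_Integration.integrable_bound)
    show "integrable lborel (\<lambda>w::real^'n. 4 * 2 powr (real CARD('n) / 2) * gauss_density 0 (sqrt 2) w)"
      by (intro integrable_mult_right integrable_gauss_density) simp
    show "AE w in lborel. norm (gauss_density 0 1 w *\<^sub>R (norm w)\<^sup>2)
        \<le> norm (4 * 2 powr (real CARD('n) / 2) * gauss_density 0 (sqrt 2) (w::real^'n))"
      by (intro AE_I2) (simp add: gauss_density_nonneg gauss_density_std_norm_sq_le)
  qed simp
qed (auto simp: gauss_density_nonneg)

lemma integrable_gauss_measure_std_norm:
  "integrable (gauss_measure (0 :: real^'n) 1) norm"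
proof -
  interpret prob_space "gauss_measure (0 :: real^'n) 1"
    by (rule prob_space_gauss_measure_std)
  have "norm w \<le> 1 + (norm w)\<^sup>2" for w :: "real^'n"
    using zero_le_power2[of "norm w - 1"] zero_le_power2[of "norm w"]
    unfolding power2_diff one_power2 mult_1_right by linarith
  then show ?thesis
    by (intro Bochner_Integration.integrable_bound[OF Bochner_Integration.integrable_add[OF
          integrable_const[of 1] integrable_gauss_measure_std_norm_sq]]) auto
qed

lemma integrable_gauss_measure_std_inner:
  "integrable (gauss_measure (0 :: real^'n) 1) (\<lambda>w. v \<bullet> w)"
proof -
  have "integrable (gauss_measure (0 :: real^'n) 1) (\<lambda>w. w)"
    using integrable_gauss_measure_std_norm by (simp add: integrable_norm_iff)
  then show ?thesis
    by (rule integrable_inner_right)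
qed

lemma integral_gauss_measure_std_inner:
  "(\<integral>w. v \<bullet> w \<partial>gauss_measure (0 :: real^'n) 1) = 0"
proof -
  have "gauss_measure (0 :: real^'n) 1 = gauss_measure 0 (-1)"
    by (simp add: gauss_measure_def gauss_density_def)
  then have "(\<integral>w. v \<bullet> w \<partial>gauss_measure (0 :: real^'n) 1) = (\<integral>w. v \<bullet> w \<partial>gauss_measure 0 (-1))"
    by (simp only:)
  also have "\<dots> = (\<integral>w. v \<bullet> (0 + (-1) *\<^sub>R w) \<partial>gauss_measure 0 1)"
    by (rule integral_gauss_measure) auto
  finally have "(\<integral>w. v \<bullet> w \<partial>gauss_measure (0 :: real^'n) 1) = - (\<integral>w. v \<bullet> w \<partial>gauss_measure 0 1)"
    by simp
  then show ?thesis
    by simp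
qed

lemma ln_gauss_density_ratio_affine:
  fixes m w :: "real^'n"
  assumes s: "s > 0"
  shows "ln (gauss_density m s (m + s *\<^sub>R w) / gauss_density 0 1 (m + s *\<^sub>R w))
    = ((norm m)\<^sup>2 / 2 - real CARD('n) * ln s) + s * (m \<bullet> w) + (s\<^sup>2 - 1) / 2 * (norm w)\<^sup>2"
proof -
  have ln_std: "ln (gauss_density 0 1 y) = - (norm y)\<^sup>2 / 2 - ln ((2 * pi) powr (real CARD('n) / 2))"
    for y :: "real^'n"
    by (simp add: gauss_density_def ln_div)
  have "gauss_density m s (m + s *\<^sub>R w) = gauss_density 0 1 w / s ^ CARD('n)"
    using gauss_density_affine[of s m w] s by (simp add: field_simps)
  then have "ln (gauss_density m s (m + s *\<^sub>R w) / gauss_density 0 1 (m + s *\<^sub>R w))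
      = ln (gauss_density 0 1 w) - real CARD('n) * ln s - ln (gauss_density 0 1 (m + s *\<^sub>R w))"
    using s gauss_density_pos[of 1 0 w] gauss_density_pos[of 1 0 "m + s *\<^sub>R w"]
    by (simp add: ln_div ln_mult ln_realpow)
  also have "(norm (m + s *\<^sub>R w))\<^sup>2 = (norm m)\<^sup>2 + 2 * s * (m \<bullet> w) + s\<^sup>2 * (norm w)\<^sup>2"
    by (simp only: power2_norm_eq_inner inner_add_left inner_add_right inner_scaleR_left
        inner_scaleR_right inner_commute[of w m]) (simp add: algebra_simps power2_eq_square)
  then have "ln (gauss_density 0 1 w) - real CARD('n) * ln s - ln (gauss_density 0 1 (m + s *\<^sub>R w))
      = ((norm m)\<^sup>2 / 2 - real CARD('n) * ln s) + s * (m \<bullet> w) + (s\<^sup>2 - 1) / 2 * (norm w)\<^sup>2"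
    unfolding ln_std by (simp add: field_simps)
  finally show ?thesis .
qed

text \<open>The second moment of the standard Gaussian (which is n) is left unevaluated: only the
  independence of the constant from m is needed.\<close>

lemma KL_gauss_measure_std:
  fixes m :: "real^'n"
  assumes s: "s > 0"
  shows "KL_divergence (exp 1) (gauss_measure 0 1) (gauss_measure m s) =
    (norm m)\<^sup>2 / 2 + (s\<^sup>2 - 1) / 2 * (\<integral>w. (norm w)\<^sup>2 \<partial>gauss_measure (0 :: real^'n) 1)
      - real CARD('n) * ln s"
proof -
  let ?N = "gauss_measure (0 :: real^'n) 1"
  let ?c = "(norm m)\<^sup>2 / 2 - real CARD('n) * ln s"
  interpret std: prob_space ?N
    by (rule prob_space_gauss_measure_std)
  have std_nonzero: "gauss_density 0 1 y \<noteq> 0" for y :: "real^'n"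
    using gauss_density_pos[of 1 0 y] by simp
  have "KL_divergence (exp 1) ?N (gauss_measure m s)
      = (\<integral>y. gauss_density m s y * log (exp 1) (gauss_density m s y / gauss_density 0 1 y) \<partial>lborel)"
    unfolding gauss_measure_def
    by (rule lborel.KL_density_density) (auto simp: gauss_density_nonneg std_nonzero)
  also have "\<dots> = (\<integral>y. ln (gauss_density m s y / gauss_density 0 1 y) \<partial>gauss_measure m s)"
    by (simp add: gauss_measure_def integral_density gauss_density_nonneg log_def)
  also have "\<dots> = (\<integral>w. ln (gauss_density m s (m + s *\<^sub>R w) / gauss_density 0 1 (m + s *\<^sub>R w)) \<partial>?N)"
    using s by (intro integral_gauss_measure) auto
  also have "\<dots> = (\<integral>w. (?c + s * (m \<bullet> w)) + (s\<^sup>2 - 1) / 2 * (norm w)\<^sup>2 \<partial>?N)"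
    using s by (simp only: ln_gauss_density_ratio_affine)
  also have "\<dots> = (\<integral>w. ?c + s * (m \<bullet> w) \<partial>?N) + (s\<^sup>2 - 1) / 2 * (\<integral>w. (norm w)\<^sup>2 \<partial>?N)"
    using integrable_gauss_measure_std_inner[of m] integrable_gauss_measure_std_norm_sq
    by (subst Bochner_Integration.integral_add) auto
  also have "(\<integral>w. ?c + s * (m \<bullet> w) \<partial>?N) = ?c"
    using integrable_gauss_measure_std_inner[of m] std.prob_space
    by (simp add: Bochner_Integration.integral_add integral_gauss_measure_std_inner)
  finally show ?thesis
    by simp
qed

lemma has_derivative_compose_adjoint:
  fixes \<mu> :: "'a::euclidean_space \<Rightarrow> 'b::euclidean_space" and f :: "'b \<Rightarrow> real"
  assumes "(\<mu> has_derivative D) (at x)" and "(f has_derivative (\<lambda>h. v \<bullet> h)) (at (\<mu> x))"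
  shows "((\<lambda>t. f (\<mu> t)) has_derivative (\<lambda>h. adjoint D v \<bullet> h)) (at x)"
proof -
  have "linear D"
    using assms(1) by (rule has_derivative_linear)
  then have "v \<bullet> D h = adjoint D v \<bullet> h" for h
    by (simp add: adjoint_works inner_commute)
  then show ?thesis
    using has_derivative_compose[OF assms] by simp
qed

lemma J_obj_eq_integral_gauss_measure_std:
  fixes \<mu> :: "'p \<Rightarrow> real^'n"
  assumes "\<sigma> > 0" and [measurable]: "r \<in> borel_measurable borel"
  shows "J_obj \<beta> \<mu> r \<sigma> t = (\<integral>w. r (\<mu> t + \<sigma> *\<^sub>R w) \<partial>gauss_measure 0 1)
    - \<beta> * ((norm (\<mu> t))\<^sup>2 / 2 + ((\<sigma>\<^sup>2 - 1) / 2 * (\<integral>w. (norm w)\<^sup>2 \<partial>gauss_measure (0 :: real^'n) 1)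
      - real CARD('n) * ln \<sigma>))"
  using integral_gauss_measure[of \<sigma> r "\<mu> t"] KL_gauss_measure_std[OF assms(1), of "\<mu> t"] assms(1)
  by (simp add: J_obj_def)

lemma has_derivative_J_obj:
  fixes \<mu> :: "'p::euclidean_space \<Rightarrow> real^'n" and r :: "real^'n \<Rightarrow> real"
  assumes "\<sigma> > 0" and D: "(\<mu> has_derivative D) (at \<theta>)"
    and r: "\<And>y. (r has_derivative (\<lambda>h. g y \<bullet> h)) (at y)"
    and g: "continuous_on UNIV g" and bound: "\<And>y. norm (g y) \<le> B"
  shows "(J_obj \<beta> \<mu> r \<sigma> has_derivative
    (\<lambda>h. adjoint D ((\<integral>w. g (\<mu> \<theta> + \<sigma> *\<^sub>R w) \<partial>gauss_measure 0 1) - \<beta> *\<^sub>R \<mu> \<theta>) \<bullet> h)) (at \<theta>)"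
proof -
  let ?N = "gauss_measure (0 :: real^'n) 1"
  define K where "K = (\<sigma>\<^sup>2 - 1) / 2 * (\<integral>w. (norm w)\<^sup>2 \<partial>?N) - real CARD('n) * ln \<sigma>"
  have "r \<in> borel_measurable borel"
    using r by (intro borel_measurable_continuous_onI continuous_at_imp_continuous_on)
      (auto intro: has_derivative_continuous)
  then have "J_obj \<beta> \<mu> r \<sigma> = (\<lambda>t. (\<integral>w. r (\<mu> t + \<sigma> *\<^sub>R w) \<partial>?N) - \<beta> * ((norm (\<mu> t))\<^sup>2 / 2 + K))"
    using assms(1) by (simp add: fun_eq_iff J_obj_eq_integral_gauss_measure_std K_def)
  moreover have "((\<lambda>m. (\<integral>w. r (m + \<sigma> *\<^sub>R w) \<partial>?N) - \<beta> * ((norm m)\<^sup>2 / 2 + K)) has_derivative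
      (\<lambda>h. ((\<integral>w. g (\<mu> \<theta> + \<sigma> *\<^sub>R w) \<partial>?N) - \<beta> *\<^sub>R \<mu> \<theta>) \<bullet> h)) (at (\<mu> \<theta>))"
    using has_derivative_integral_shift[OF prob_space_gauss_measure_std sets_gauss_measure
        integrable_gauss_measure_std_norm r g bound, of \<sigma> "\<mu> \<theta>"]
    by (auto intro!: derivative_eq_intros simp: inner_diff_left)
  ultimately show ?thesis
    using has_derivative_compose_adjoint[OF D] by simp
qed

lemma tendsto_gradient_J_obj:
  fixes \<mu> :: "'p::euclidean_space \<Rightarrow> real^'n" and g :: "real^'n \<Rightarrow> real^'n"
  assumes D: "(\<mu> has_derivative D) (at \<theta>)"
    and g: "continuous_on UNIV g" and bound: "\<And>y. norm (g y) \<le> B"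
  shows "((\<lambda>\<sigma>. adjoint D ((\<integral>w. g (\<mu> \<theta> + \<sigma> *\<^sub>R w) \<partial>gauss_measure 0 1) - \<beta> *\<^sub>R \<mu> \<theta>))
    \<longlongrightarrow> adjoint D (g (\<mu> \<theta>) - \<beta> *\<^sub>R \<mu> \<theta>)) (at_right 0)"
proof -
  have "((\<lambda>\<sigma>. \<integral>w. g (\<mu> \<theta> + \<sigma> *\<^sub>R w) \<partial>gauss_measure 0 1) \<longlongrightarrow> g (\<mu> \<theta>)) (at_right 0)"
    using tendsto_integral_shift_scaled[OF prob_space_gauss_measure_std sets_gauss_measure g bound]
    by (rule tendsto_mono[OF at_le, rotated]) simp
  then have "((\<lambda>\<sigma>. (\<integral>w. g (\<mu> \<theta> + \<sigma> *\<^sub>R w) \<partial>gauss_measure 0 1) - \<beta> *\<^sub>R \<mu> \<theta>)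
      \<longlongrightarrow> g (\<mu> \<theta>) - \<beta> *\<^sub>R \<mu> \<theta>) (at_right 0)"
    by (intro tendsto_diff tendsto_const)
  moreover have "bounded_linear (adjoint D)"
    using adjoint_linear[OF has_derivative_linear[OF D]] linear_conv_bounded_linear by blast
  ultimately show ?thesis
    by (rule bounded_linear.tendsto[rotated])
qed

theorem proposition5:
  fixes \<beta> M :: real
    and \<mu> :: "'p::euclidean_space \<Rightarrow> real^'n"
    and r :: "real^'n \<Rightarrow> real"
    and \<theta> :: "'p"
  assumes beta_pos: "\<beta> > 0"
    and mu_diff: "\<And>t. \<mu> differentiable (at t)"
    and r_C2: "\<exists>g H. (\<forall>y. (r has_derivative (\<lambda>h. g y \<bullet> h)) (at y))
                   \<and> (\<forall>y. (g has_derivative blinfun_apply (H y)) (at y))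
                   \<and> continuous_on UNIV (H :: real^'n \<Rightarrow> ((real^'n) \<Rightarrow>\<^sub>L (real^'n)))
                   \<and> (\<forall>y. norm (g y) \<le> M)"
  shows "\<exists>G G0.
           (\<forall>\<sigma>>0. ((\<lambda>t. J_obj \<beta> \<mu> r \<sigma> t) has_derivative (\<lambda>h. G \<sigma> \<bullet> h)) (at \<theta>))
         \<and> ((\<lambda>t. r (\<mu> t) - \<beta> / 2 * (norm (\<mu> t))\<^sup>2) has_derivative (\<lambda>h. G0 \<bullet> h)) (at \<theta>)
         \<and> (G \<longlongrightarrow> G0) (at_right 0)"
proof -
  obtain g H where r_deriv: "\<And>y. (r has_derivative (\<lambda>h. g y \<bullet> h)) (at y)"
    and g_deriv: "\<And>y. (g has_derivative blinfun_apply (H y)) (at y)"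
    and g_bound: "\<And>y. norm (g y) \<le> M"
    using r_C2 by blast
  have g_cont: "continuous_on UNIV g"
    using g_deriv by (intro continuous_at_imp_continuous_on) (auto intro: has_derivative_continuous)
  obtain D where D: "(\<mu> has_derivative D) (at \<theta>)"
    using mu_diff[of \<theta>] by (auto simp: differentiable_def)
  define G where "G \<sigma> = adjoint D ((\<integral>w. g (\<mu> \<theta> + \<sigma> *\<^sub>R w) \<partial>gauss_measure 0 1) - \<beta> *\<^sub>R \<mu> \<theta>)" for \<sigma>
  define G0 where "G0 = adjoint D (g (\<mu> \<theta>) - \<beta> *\<^sub>R \<mu> \<theta>)"
  have "\<forall>\<sigma>>0. (J_obj \<beta> \<mu> r \<sigma> has_derivative (\<lambda>h. G \<sigma> \<bullet> h)) (at \<theta>)"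
    unfolding G_def using has_derivative_J_obj[OF _ D r_deriv g_cont g_bound] by blast
  moreover have "((\<lambda>t. r (\<mu> t) - \<beta> / 2 * (norm (\<mu> t))\<^sup>2) has_derivative (\<lambda>h. G0 \<bullet> h)) (at \<theta>)"
  proof -
    have "((\<lambda>y. r y - \<beta> / 2 * (norm y)\<^sup>2) has_derivative (\<lambda>h. (g (\<mu> \<theta>) - \<beta> *\<^sub>R \<mu> \<theta>) \<bullet> h)) (at (\<mu> \<theta>))"
      using r_deriv[of "\<mu> \<theta>"] by (auto intro!: derivative_eq_intros simp: inner_diff_left)
    then show ?thesis
      unfolding G0_def by (rule has_derivative_compose_adjoint[OF D])
  qed
  moreover have "(G \<longlongrightarrow> G0) (at_right 0)"
    unfolding G_def[abs_def] G0_def by (rule tendsto_gradient_J_obj[OF D g_cont g_bound])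
  ultimately show ?thesis
    by blast
qed

end
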